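(* Let $H=(V,E)$ be a finite simple graph, let $M$ be a maximum $2$-matching of $H$, let $v_0$ be a singleton of $M$, and let $v_0,v_1,\dots,v_{2i+2}$ be an A-alternating path saving $v_0$. Define $$M'=\bigl(M\setminus\{v_{2j+1}v_{2j+2}: 0\le j\le i\}\bigr)\cup\{v_{2j}v_{2j+1}: 0\le j\le i\}.$$ Then $M'$ is a maximum $2$-matching of $H$, and $M'$ has exactly one fewer singleton than $M$.
   Context: A $2$-matching of $H$ is a set $M\subseteq E$ in which every vertex is incident to at most two edges of $M$. It is maximum if $|M|$ is as large as possible. The components of $(V,M)$ are paths and cycles. A single vertex counts as a $0$-path, and a $k$-path has $k$ edges. A singleton of $M$ is a vertex of degree $0$ in $M$. Given a maximum $2$-matching $M$ and a singleton $v_0$ of $M$, an A-alternating path saving $v_0$ is a sequence of pairwise distinct vertices $v_0,v_1,\dots,v_{2i+2}$, with $i\ge 0$, satisfying: (1) $v_{2j}v_{2j+1}\in E\setminus M$ for every $j=0,\dots,i$; (2) for every $j=1,\dots,i$ there is a component $P_j$ of $(V,M)$ that is a $2$-path, with $v_{2j-1}$ its middle vertex and $v_{2j}$ one of its two endpoints, and $P_1,\dots,P_i$ are pairwise distinct; (3) $v_{2i+1}$ lies on a component $Q$ of $(V,M)$ that is either a cycle or a path with at least $3$ edges, $v_{2i+1}v_{2i+2}\in M$, and if $Q$ is a path then $v_{2i+2}$ is not an endpoint of $Q$. *)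

theory Defs
  imports Main
begin

definition simple_graph :: "'a set \<Rightarrow> 'a set set \<Rightarrow> bool" where
  "simple_graph V E \<longleftrightarrow> finite V \<and> (\<forall>e\<in>E. \<exists>u v. e = {u, v} \<and> u \<in> V \<and> v \<in> V \<and> u \<noteq> v)"

definition deg :: "'a set set \<Rightarrow> 'a \<Rightarrow> nat" where
  "deg M v = card {e \<in> M. v \<in> e}"

definition two_matching :: "'a set \<Rightarrow> 'a set set \<Rightarrow> 'a set set \<Rightarrow> bool" where
  "two_matching V E M \<longleftrightarrow> M \<subseteq> E \<and> (\<forall>v\<in>V. deg M v \<le> 2)"

definition max_two_matching :: "'a set \<Rightarrow> 'a set set \<Rightarrow> 'a set set \<Rightarrow> bool" where
  "max_two_matching V E M \<longleftrightarrow> two_matching V E M \<and>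
     (\<forall>M'. two_matching V E M' \<longrightarrow> card M' \<le> card M)"

definition singletons :: "'a set \<Rightarrow> 'a set set \<Rightarrow> 'a set" where
  "singletons V M = {v \<in> V. deg M v = 0}"

definition component_of :: "'a set \<Rightarrow> 'a set set \<Rightarrow> 'a \<Rightarrow> 'a set" where
  "component_of V M v = {u \<in> V. (\<lambda>x y. {x, y} \<in> M)\<^sup>*\<^sup>* v u}"

definition comp_edges :: "'a set set \<Rightarrow> 'a set \<Rightarrow> 'a set set" where
  "comp_edges M C = {e \<in> M. e \<subseteq> C}"

definition path_edges :: "'a list \<Rightarrow> 'a set set" where
  "path_edges xs = {{xs ! k, xs ! (k + 1)} | k. k + 1 < length xs}"

definition path_comp :: "'a set \<Rightarrow> 'a set set \<Rightarrow> 'a list \<Rightarrow> bool" where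
  "path_comp V M xs \<longleftrightarrow> xs \<noteq> [] \<and> distinct xs \<and> hd xs \<in> V \<and>
     set xs = component_of V M (hd xs) \<and> comp_edges M (set xs) = path_edges xs"

definition cycle_comp :: "'a set \<Rightarrow> 'a set set \<Rightarrow> 'a list \<Rightarrow> bool" where
  "cycle_comp V M xs \<longleftrightarrow> length xs \<ge> 3 \<and> distinct xs \<and> hd xs \<in> V \<and>
     set xs = component_of V M (hd xs) \<and>
     comp_edges M (set xs) = path_edges xs \<union> {{last xs, hd xs}}"

definition A_alt_path :: "'a set \<Rightarrow> 'a set set \<Rightarrow> 'a set set \<Rightarrow> nat \<Rightarrow> 'a list \<Rightarrow> bool" where
  "A_alt_path V E M i vs \<longleftrightarrow>
     length vs = 2 * i + 3 \<and> distinct vs \<and> set vs \<subseteq> V \<and>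
     (\<forall>j\<le>i. {vs ! (2*j), vs ! (2*j+1)} \<in> E - M) \<and>
     (\<exists>P :: nat \<Rightarrow> 'a list.
        (\<forall>j\<in>{1..i}. path_comp V M (P j) \<and> length (P j) = 3 \<and>
            P j ! 1 = vs ! (2*j - 1) \<and> vs ! (2*j) \<in> {P j ! 0, P j ! 2}) \<and>
        inj_on (\<lambda>j. set (P j)) {1..i}) \<and>
     {vs ! (2*i+1), vs ! (2*i+2)} \<in> M \<and>
     (\<exists>Q. vs ! (2*i+1) \<in> set Q \<and>
        (cycle_comp V M Q \<or>
         (path_comp V M Q \<and> length Q \<ge> 4 \<and> vs ! (2*i+2) \<notin> {hd Q, last Q})))"

end

theory Submission
  imports Defs
begin

text \<open>Let \<open>R\<close> and \<open>A\<close> be the odd- and even-indexed edges of the path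
  \<open>v_0 \<dots> v_(2i+2)\<close>, so that \<open>M' = M - R \<union> A\<close>; both have \<open>i + 1\<close> elements, hence
  \<open>|M'| = |M|\<close>. Every inner vertex of the path loses one incident edge and gains one,
  \<open>v_0\<close> gains one and \<open>v_(2i+2)\<close> loses one. The last is harmless: \<open>v_(2i+2)\<close> is an
  inner vertex of a path or a vertex of a cycle of \<open>(V, M)\<close>, so it has degree 2 in \<open>M\<close>.
  Thus \<open>M'\<close> is a 2-matching of maximum size whose singletons are those of \<open>M\<close>
  other than \<open>v_0\<close>.\<close>

lemma deg_Diff_Un:
  assumes "finite M" "R \<subseteq> M" "A \<inter> M = {}" "finite A"
  shows "deg (M - R \<union> A) v + card {e\<in>R. v \<in> e} = deg M v + card {e\<in>A. v \<in> e}"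
proof -
  have "finite R" using assms(1,2) by (rule finite_subset[rotated])
  have split_R: "{e \<in> M \<union> A. v \<in> e} = {e \<in> M - R \<union> A. v \<in> e} \<union> {e\<in>R. v \<in> e}"
    using assms(2) by blast
  have split_A: "{e \<in> M \<union> A. v \<in> e} = {e\<in>M. v \<in> e} \<union> {e\<in>A. v \<in> e}"
    by blast
  have "card {e \<in> M \<union> A. v \<in> e} = deg (M - R \<union> A) v + card {e\<in>R. v \<in> e}"
    unfolding deg_def split_R using assms \<open>finite R\<close> by (intro card_Un_disjoint) auto
  moreover have "card {e \<in> M \<union> A. v \<in> e} = deg M v + card {e\<in>A. v \<in> e}"
    unfolding deg_def split_A using assms by (intro card_Un_disjoint) auto
  ultimately show ?thesis by simp
qed

lemma card_Diff_Un_eq: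
  assumes "finite M" "R \<subseteq> M" "A \<inter> M = {}" "finite A" "card A = card R"
  shows "card (M - R \<union> A) = card M"
proof -
  have "finite R" using assms(1,2) by (rule finite_subset[rotated])
  then have "card (M - R) = card M - card R" "card R \<le> card M"
    using assms(1,2) by (simp_all add: card_Diff_subset card_mono)
  moreover have "card (M - R \<union> A) = card (M - R) + card A"
    using assms(1,3,4) by (intro card_Un_disjoint) auto
  ultimately show ?thesis using assms(5) by linarith
qed

lemma two_le_deg:
  assumes "finite M" "{a, w} \<in> M" "{w, b} \<in> M" "a \<noteq> b"
  shows "2 \<le> deg M w"
proof -
  have "{a, w} \<noteq> {w, b}" using assms(4) by (auto simp: doubleton_eq_iff)
  moreover have "card {{a, w}, {w, b}} \<le> deg M w"
    unfolding deg_def using assms(1-3) by (intro card_mono) auto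
  ultimately show ?thesis by simp
qed

lemma two_le_deg_interior:
  assumes "finite M" "path_edges xs \<subseteq> M" "distinct xs" "0 < k" "Suc k < length xs"
  shows "2 \<le> deg M (xs ! k)"
proof (rule two_le_deg[OF assms(1)])
  show "{xs ! (k - 1), xs ! k} \<in> M" "{xs ! k, xs ! Suc k} \<in> M"
    using assms(2,4,5) unfolding path_edges_def by (force, force)
  show "xs ! (k - 1) \<noteq> xs ! Suc k" using assms(3-5) by (simp add: nth_eq_iff_index_eq)
qed

lemma simple_graph_finite_edges:
  assumes "simple_graph V E"
  shows "finite E"
proof -
  have "E \<subseteq> Pow V" using assms unfolding simple_graph_def by fastforce
  then show ?thesis using assms unfolding simple_graph_def by (meson finite_Pow_iff finite_subset)
qed

lemma component_of_closed:
  assumes "u \<in> component_of V M x" "{u, w} \<in> M" "w \<in> V"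
  shows "w \<in> component_of V M x"
  using assms unfolding component_of_def by (auto intro: rtranclp.rtrancl_into_rtrancl)

lemma path_comp_edge:
  assumes "path_comp V M xs" "Suc k < length xs"
  shows "{xs ! k, xs ! Suc k} \<in> M"
  using assms unfolding path_comp_def comp_edges_def path_edges_def by fastforce

lemma two_le_deg_path_comp:
  assumes "finite M" "path_comp V M Q" "w \<in> set Q" "w \<notin> {hd Q, last Q}"
  shows "2 \<le> deg M w"
proof -
  obtain k where k: "k < length Q" "w = Q ! k" using assms(3) by (auto simp: in_set_conv_nth)
  have Q: "Q \<noteq> []" "distinct Q" "path_edges Q \<subseteq> M"
    using assms(2) unfolding path_comp_def comp_edges_def by auto
  have "k \<noteq> 0" using k assms(4) Q(1) by (metis hd_conv_nth insertCI)
  moreover have "k \<noteq> length Q - 1" using k assms(4) Q(1) by (metis last_conv_nth insertCI)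
  ultimately show ?thesis using two_le_deg_interior[OF assms(1) Q(3,2), of k] k by simp
qed

lemma two_le_deg_cycle_comp:
  assumes "finite M" "cycle_comp V M Q" "w \<in> set Q"
  shows "2 \<le> deg M w"
proof -
  obtain k where k: "k < length Q" "w = Q ! k" using assms(3) by (auto simp: in_set_conv_nth)
  have Q: "3 \<le> length Q" "distinct Q" "path_edges Q \<subseteq> M"
    and "{last Q, hd Q} \<in> M"
    using assms(2) unfolding cycle_comp_def comp_edges_def by auto
  then have closing: "{Q ! (length Q - 1), Q ! 0} \<in> M"
    by (metis hd_conv_nth last_conv_nth list.size(3) not_numeral_le_zero)
  have edge: "{Q ! l, Q ! Suc l} \<in> M" if "Suc l < length Q" for l
    using Q(3) that unfolding path_edges_def by force
  consider "k = 0" | "0 < k" "Suc k < length Q" | "k = length Q - 1" using k(1) by linarith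
  then show ?thesis
  proof cases
    case 1
    show ?thesis
    proof (rule two_le_deg[OF assms(1)])
      show "{Q ! (length Q - 1), w} \<in> M" using closing 1 k by simp
      show "{w, Q ! 1} \<in> M" using edge[of 0] Q(1) 1 k by simp
      show "Q ! (length Q - 1) \<noteq> Q ! 1" using Q(1,2) by (simp add: nth_eq_iff_index_eq)
    qed
  next
    case 2
    then show ?thesis using two_le_deg_interior[OF assms(1) Q(3,2)] k by simp
  next
    case 3
    show ?thesis
    proof (rule two_le_deg[OF assms(1)])
      have "Suc (length Q - 2) = length Q - 1" using Q(1) by simp
      then show "{Q ! (length Q - 2), w} \<in> M" using edge[of "length Q - 2"] Q(1) 3 k by simp
      show "{w, Q ! 0} \<in> M" using closing 3 k by (simp add: insert_commute)
      show "Q ! (length Q - 2) \<noteq> Q ! 0" using Q(1,2) by (subst nth_eq_iff_index_eq) auto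
    qed
  qed
qed

definition nth_edge :: "'a list \<Rightarrow> nat \<Rightarrow> 'a set" where
  "nth_edge xs k = {xs ! k, xs ! Suc k}"

lemma inj_on_nth_edge:
  assumes "distinct xs" "\<forall>k\<in>K. Suc k < length xs"
  shows "inj_on (nth_edge xs) K"
proof (rule inj_onI)
  fix k l assume "k \<in> K" "l \<in> K" "nth_edge xs k = nth_edge xs l"
  moreover have "Suc k < length xs" "Suc l < length xs" using \<open>k \<in> K\<close> \<open>l \<in> K\<close> assms(2) by auto
  ultimately show "k = l" using assms(1) by (auto simp: nth_edge_def doubleton_eq_iff nth_eq_iff_index_eq)
qed

text \<open>For \<open>m = 0\<close> the truncated \<open>m - 1\<close> is \<open>0\<close>, so only the edge starting at \<open>xs ! 0\<close> is counted.\<close>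
lemma nth_edges_containing_nth:
  assumes "distinct xs" "\<forall>k\<in>K. Suc k < length xs" "m < length xs"
  shows "{e \<in> nth_edge xs ` K. xs ! m \<in> e} = nth_edge xs ` (K \<inter> {m - 1, m})"
proof (intro set_eqI iffI)
  fix e assume "e \<in> {e \<in> nth_edge xs ` K. xs ! m \<in> e}"
  then obtain k where "k \<in> K" "e = {xs ! k, xs ! Suc k}" "xs ! m \<in> e"
    unfolding nth_edge_def by blast
  then show "e \<in> nth_edge xs ` (K \<inter> {m - 1, m})"
    using assms by (auto simp: nth_edge_def nth_eq_iff_index_eq)
next
  fix e assume "e \<in> nth_edge xs ` (K \<inter> {m - 1, m})"
  then show "e \<in> {e \<in> nth_edge xs ` K. xs ! m \<in> e}"
    by (cases m) (auto simp: nth_edge_def)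
qed

lemma card_nth_edges_containing_nth:
  assumes "distinct xs" "\<forall>k\<in>K. Suc k < length xs" "m < length xs"
  shows "card {e \<in> nth_edge xs ` K. xs ! m \<in> e} = card (K \<inter> {m - 1, m})"
  unfolding nth_edges_containing_nth[OF assms]
  using inj_on_nth_edge[OF assms(1,2)] by (auto intro: card_image inj_on_subset)

lemma card_odd_Int_pair:
  "(m::nat) \<le> 2 * n \<Longrightarrow> card ({k. k < 2 * n \<and> odd k} \<inter> {m - 1, m}) = (if m = 0 then 0 else 1)"
proof -
  assume "m \<le> 2 * n"
  then have "{k. k < 2 * n \<and> odd k} \<inter> {m - 1, m} = (if m = 0 then {} else if odd m then {m} else {m - 1})"
    by (auto elim: oddE) presburger
  then show ?thesis by simp
qed

lemma card_even_Int_pair: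
  "(m::nat) \<le> 2 * n \<Longrightarrow> card ({k. k < 2 * n \<and> even k} \<inter> {m - 1, m}) = (if m = 2 * n then 0 else 1)"
proof -
  assume "m \<le> 2 * n"
  then have "{k. k < 2 * n \<and> even k} \<inter> {m - 1, m} = (if m = 2 * n then {} else if even m then {m} else {m - 1})"
    by (auto elim: oddE)
  then show ?thesis by simp
qed

lemma odd_below_eq_Suc_even_below: "{k. k < 2 * n \<and> odd k} = Suc ` {k. k < 2 * n \<and> even k}"
  by (auto simp: image_iff elim!: oddE)

definition removed_edges :: "'a list \<Rightarrow> nat \<Rightarrow> 'a set set" where
  "removed_edges vs i = {{vs ! (2*j+1), vs ! (2*j+2)} | j. j \<le> i}"

definition added_edges :: "'a list \<Rightarrow> nat \<Rightarrow> 'a set set" where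
  "added_edges vs i = {{vs ! (2*j), vs ! (2*j+1)} | j. j \<le> i}"

lemma removed_edges_eq: "removed_edges vs i = nth_edge vs ` {k. k < 2 * Suc i \<and> odd k}"
proof -
  have "{k. k < 2 * Suc i \<and> odd k} = (\<lambda>j. 2*j+1) ` {..i}" by (auto elim!: oddE)
  then show ?thesis unfolding removed_edges_def nth_edge_def by auto
qed

lemma added_edges_eq: "added_edges vs i = nth_edge vs ` {k. k < 2 * Suc i \<and> even k}"
proof -
  have "{k. k < 2 * Suc i \<and> even k} = (\<lambda>j. 2*j) ` {..i}" by (auto elim!: evenE)
  then show ?thesis unfolding added_edges_def nth_edge_def by auto
qed

lemma card_removed_edges_eq_added_edges:
  assumes "distinct vs" "length vs = 2 * i + 3"
  shows "card (removed_edges vs i) = card (added_edges vs i)"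
proof -
  have "inj_on (nth_edge vs) {k. k < 2 * Suc i \<and> odd k}" "inj_on (nth_edge vs) {k. k < 2 * Suc i \<and> even k}"
    using assms by (auto intro: inj_on_nth_edge)
  then show ?thesis
    unfolding removed_edges_eq added_edges_eq odd_below_eq_Suc_even_below
    by (simp add: card_image)
qed

lemma deg_alternating_swap:
  assumes "finite M" "distinct vs" "length vs = 2 * i + 3"
    and "removed_edges vs i \<subseteq> M" "added_edges vs i \<inter> M = {}"
  shows "deg (M - removed_edges vs i \<union> added_edges vs i) v + (if v = vs ! (2*i+2) then 1 else 0)
       = deg M v + (if v = vs ! 0 then 1 else 0)"
proof -
  define Kr Ka where "Kr = {k. k < 2 * Suc i \<and> odd k}" and "Ka = {k. k < 2 * Suc i \<and> even k}"
  have idx: "\<forall>k\<in>Kr. Suc k < length vs" "\<forall>k\<in>Ka. Suc k < length vs"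
    using assms(3) by (auto simp: Kr_def Ka_def)
  have swap: "deg (M - removed_edges vs i \<union> added_edges vs i) v + card {e \<in> nth_edge vs ` Kr. v \<in> e}
      = deg M v + card {e \<in> nth_edge vs ` Ka. v \<in> e}"
    using deg_Diff_Un[OF assms(1,4,5)] unfolding removed_edges_eq added_edges_eq Kr_def Ka_def by simp
  show ?thesis
  proof (cases "v \<in> set vs")
    case True
    then obtain m where m: "m < length vs" "v = vs ! m" by (auto simp: in_set_conv_nth)
    have "card {e \<in> nth_edge vs ` Kr. v \<in> e} = (if m = 0 then 0 else 1)"
      using card_nth_edges_containing_nth[OF assms(2) idx(1) m(1)] card_odd_Int_pair[of m "Suc i"]
        m assms(3) unfolding Kr_def by simp
    moreover have "card {e \<in> nth_edge vs ` Ka. v \<in> e} = (if m = 2 * Suc i then 0 else 1)"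
      using card_nth_edges_containing_nth[OF assms(2) idx(2) m(1)] card_even_Int_pair[of m "Suc i"]
        m assms(3) unfolding Ka_def by simp
    moreover have "v = vs ! 0 \<longleftrightarrow> m = 0" "v = vs ! (2*i+2) \<longleftrightarrow> m = 2 * Suc i"
      using m assms(2,3) by (auto simp: nth_eq_iff_index_eq)
    ultimately show ?thesis using swap by (auto split: if_splits)
  next
    case False
    have "nth_edge vs k \<subseteq> set vs" if "Suc k < length vs" for k
      using that by (simp add: nth_edge_def)
    then have none: "{e \<in> nth_edge vs ` K. v \<in> e} = {}" if "\<forall>k\<in>K. Suc k < length vs" for K
      using that False by blast
    have "v \<noteq> vs ! 0" "v \<noteq> vs ! (2*i+2)" using False assms(3) by auto
    then show ?thesis using swap none[OF idx(1)] none[OF idx(2)] by simp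
  qed
qed

lemma A_alt_path_distinct_length:
  "A_alt_path V E M i vs \<Longrightarrow> distinct vs \<and> length vs = 2 * i + 3"
  unfolding A_alt_path_def by simp

lemma A_alt_path_added_edges:
  assumes "A_alt_path V E M i vs"
  shows "added_edges vs i \<subseteq> E" "added_edges vs i \<inter> M = {}"
  using assms unfolding A_alt_path_def added_edges_def by blast+

lemma A_alt_path_removed_edges:
  assumes "A_alt_path V E M i vs"
  shows "removed_edges vs i \<subseteq> M"
proof
  fix e assume "e \<in> removed_edges vs i"
  then obtain j where j: "j \<le> i" "e = {vs ! (2*j+1), vs ! (2*j+2)}"
    unfolding removed_edges_def by blast
  obtain P where P: "\<forall>j\<in>{1..i}. path_comp V M (P j) \<and> length (P j) = 3 \<and>
      P j ! 1 = vs ! (2*j - 1) \<and> vs ! (2*j) \<in> {P j ! 0, P j ! 2}"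
    using assms unfolding A_alt_path_def by blast
  show "e \<in> M"
  proof (cases "j = i")
    case True
    then show ?thesis using assms j unfolding A_alt_path_def by simp
  next
    case False
    then have "Suc j \<in> {1..i}" using j(1) by simp
    with P have "path_comp V M (P (Suc j)) \<and> length (P (Suc j)) = 3 \<and>
      P (Suc j) ! 1 = vs ! (2 * Suc j - 1) \<and> vs ! (2 * Suc j) \<in> {P (Suc j) ! 0, P (Suc j) ! 2}"
      by blast
    then have "path_comp V M (P (Suc j))" "length (P (Suc j)) = 3"
      "P (Suc j) ! 1 = vs ! (2*j+1)" "vs ! (2*j+2) \<in> {P (Suc j) ! 0, P (Suc j) ! 2}"
      by simp_all
    moreover from this have "{P (Suc j) ! 0, P (Suc j) ! 1} \<in> M" "{P (Suc j) ! 1, P (Suc j) ! 2} \<in> M"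
      using path_comp_edge[of V M "P (Suc j)" 0] path_comp_edge[of V M "P (Suc j)" 1]
      by (simp_all add: numeral_2_eq_2)
    ultimately show ?thesis using j(2) by (auto simp: insert_commute)
  qed
qed

lemma A_alt_path_end_deg:
  assumes "finite M" "A_alt_path V E M i vs"
  shows "2 \<le> deg M (vs ! (2*i+2))"
proof -
  obtain Q where Q: "vs ! (2*i+1) \<in> set Q"
      "cycle_comp V M Q \<or> path_comp V M Q \<and> vs ! (2*i+2) \<notin> {hd Q, last Q}"
    using assms(2) unfolding A_alt_path_def by blast
  have edge: "{vs ! (2*i+1), vs ! (2*i+2)} \<in> M" and end_V: "vs ! (2*i+2) \<in> V"
    using assms(2) unfolding A_alt_path_def by (auto dest: nth_mem)
  have comp: "set Q = component_of V M (hd Q)"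
    using Q(2) unfolding cycle_comp_def path_comp_def by auto
  have end_Q: "vs ! (2*i+2) \<in> set Q"
    unfolding comp by (rule component_of_closed[OF _ edge end_V]) (use Q(1) comp in simp)
  from Q(2) show ?thesis
  proof
    assume "cycle_comp V M Q"
    then show ?thesis using two_le_deg_cycle_comp[OF assms(1) _ end_Q] by simp
  next
    assume "path_comp V M Q \<and> vs ! (2*i+2) \<notin> {hd Q, last Q}"
    then show ?thesis using two_le_deg_path_comp[OF assms(1) _ end_Q] by blast
  qed
qed

lemma A_alt_path_swap_deg:
  assumes "finite M" "two_matching V E M" "vs ! 0 \<in> singletons V M"
    and "A_alt_path V E M i vs" "v \<in> V"
  defines "M' \<equiv> M - removed_edges vs i \<union> added_edges vs i"
  shows "deg M' v \<le> 2 \<and> (deg M' v = 0 \<longleftrightarrow> deg M v = 0 \<and> v \<noteq> vs ! 0)"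
proof -
  have vs: "distinct vs" "length vs = 2 * i + 3" using A_alt_path_distinct_length[OF assms(4)] by auto
  have swap: "deg M' v + (if v = vs ! (2*i+2) then 1 else 0) = deg M v + (if v = vs ! 0 then 1 else 0)"
    unfolding M'_def using deg_alternating_swap[OF assms(1) vs] A_alt_path_removed_edges[OF assms(4)]
      A_alt_path_added_edges[OF assms(4)] by blast
  have "deg M v \<le> 2" "deg M (vs ! 0) = 0" "vs ! 0 \<noteq> vs ! (2*i+2)"
    using assms(2,3,5) vs unfolding two_matching_def singletons_def by (auto simp: nth_eq_iff_index_eq)
  then show ?thesis
    using swap A_alt_path_end_deg[OF assms(1,4)] by (auto split: if_splits)
qed

theorem mainTheorem2:
  fixes V :: "'a set" and E M :: "'a set set" and i :: nat and vs :: "'a list"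
  assumes "simple_graph V E"
    and "max_two_matching V E M"
    and "vs ! 0 \<in> singletons V M"
    and "A_alt_path V E M i vs"
  shows "max_two_matching V E
           ((M - {{vs ! (2*j+1), vs ! (2*j+2)} | j. j \<le> i}) \<union> {{vs ! (2*j), vs ! (2*j+1)} | j. j \<le> i})
       \<and> card (singletons V
           ((M - {{vs ! (2*j+1), vs ! (2*j+2)} | j. j \<le> i}) \<union> {{vs ! (2*j), vs ! (2*j+1)} | j. j \<le> i}))
           + 1 = card (singletons V M)"
proof -
  define M' where "M' = M - removed_edges vs i \<union> added_edges vs i"
  have M: "two_matching V E M" "\<And>N. two_matching V E N \<Longrightarrow> card N \<le> card M"
    using assms(2) unfolding max_two_matching_def by auto
  have finM: "finite M"
    using M(1) simple_graph_finite_edges[OF assms(1)] unfolding two_matching_def by (auto intro: finite_subset)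
  note deg' = A_alt_path_swap_deg[OF finM M(1) assms(3,4), folded M'_def]
  have "two_matching V E M'"
    using M(1) A_alt_path_added_edges[OF assms(4)] deg' unfolding two_matching_def M'_def by blast
  moreover have "card M' = card M"
    unfolding M'_def using A_alt_path_distinct_length[OF assms(4)] A_alt_path_removed_edges[OF assms(4)]
      A_alt_path_added_edges[OF assms(4)] finM
    by (intro card_Diff_Un_eq) (auto simp: card_removed_edges_eq_added_edges added_edges_eq)
  ultimately have "max_two_matching V E M'" using M unfolding max_two_matching_def by simp
  moreover have "singletons V M' = singletons V M - {vs ! 0}"
    unfolding singletons_def using deg' by auto
  moreover have "0 < card (singletons V M)"
    using assms(1,3) unfolding simple_graph_def singletons_def by (auto simp: card_gt_0_iff)
  ultimately show ?thesis
    using assms(3) unfolding M'_def removed_edges_def added_edges_def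
    by (simp add: card_Diff_singleton)
qed

end
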